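(* Let $G$ and $H$ be graphs and let $f,f'\colon \varGamma(H)\to \varGamma(G)$ be properad morphisms such that the image of $f$ and the image of $f'$ are both subgraphs of $G$. If $f_0=f'_0$ as functions $\mathrm{Ed}(H)\to \mathrm{Ed}(G)$, then $f=f'$. That is, a properad map $\varGamma(H)\to\varGamma(G)$ whose image is a subgraph of $G$ is uniquely determined by its effect on edges.
   Context: A graph is a finite connected directed graph, allowed to have legs (edges attached to a vertex at only one end; the graph $\downarrow$ consisting of a single edge and no vertex is allowed), with no directed cycles, together with orderings (bijections with $\{1,\dots,k\}$) of its global inputs $\mathrm{in}(G)$ and outputs $\mathrm{out}(G)$ and of the inputs $\mathrm{in}(v)$ and outputs $\mathrm{out}(v)$ of each vertex $v\in\mathrm{Vt}(G)$; $\mathrm{Ed}(G)$ denotes its set of edges. Graph substitution $K\{L_v\}_{v}$ replaces each vertex $v$ of $K$ by a graph $L_v$ whose inputs and outputs are identified bijectively (and compatibly with colorings) with $\mathrm{in}(v)$ and $\mathrm{out}(v)$. For a graph $G$, the properad $\varGamma(G)$ has color set $\mathrm{Ed}(G)$, and its operations of biprofile $(\underline c;\underline d)$ are $\hat G$-decorated graphs: graphs $K$ with inputs $\underline c$ and outputs $\underline d$ whose edges are colored by edges of $G$, together with a function $\mathrm{Vt}(K)\to\mathrm{Vt}(G)$ compatible with the colorings; composition is graph substitution. A properad morphism $f\colon\varGamma(H)\to\varGamma(G)$ consists of a function $f_0\colon \mathrm{Ed}(H)\to\mathrm{Ed}(G)$ and an assignment $f_1$ sending each $v\in\mathrm{Vt}(H)$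 to a $\hat G$-decorated graph with inputs $f_0(\mathrm{in}(v))$ and outputs $f_0(\mathrm{out}(v))$. The image of $f$ is the $\hat G$-decorated graph $f_0H\{f_1(v)\}_{v\in\mathrm{Vt}(H)}$, obtained by relabeling the edges of $H$ via $f_0$ and substituting $f_1(v)$ at each vertex $v$; saying the image is a subgraph of $G$ means that via its decorations this graph is identified with a subgraph of $G$. *)

theory Defs
  imports Main
begin

text \<open>A graph: vertex set, edge set, for each vertex the ordered list of its inputs and
outputs, and the ordered lists of global inputs and outputs.  A list encodes a bijection
with {1..k}.\<close>

record ('v, 'e) graph =
  gV    :: "'v set"
  gE    :: "'e set"
  gin   :: "'v \<Rightarrow> 'e list"
  gout  :: "'v \<Rightarrow> 'e list"
  ginG  :: "'e list"
  goutG :: "'e list"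

definition incidence :: "('v, 'e) graph \<Rightarrow> ('v + 'e) rel" where
  "incidence G = {(Inl v, Inr e) | v e. v \<in> gV G \<and> (e \<in> set (gin G v) \<or> e \<in> set (gout G v))}"

definition vadj :: "('v, 'e) graph \<Rightarrow> 'v rel" where
  "vadj G = {(u, w). u \<in> gV G \<and> w \<in> gV G \<and> (\<exists>e. e \<in> set (gout G u) \<and> e \<in> set (gin G w))}"

definition wf_graph :: "('v, 'e) graph \<Rightarrow> bool" where
  "wf_graph G \<longleftrightarrow>
     finite (gV G) \<and> finite (gE G) \<and> (gV G \<noteq> {} \<or> gE G \<noteq> {}) \<and>
     (\<forall>v\<in>gV G. distinct (gin G v) \<and> distinct (gout G v) \<and>
                 set (gin G v) \<subseteq> gE G \<and> set (gout G v) \<subseteq> gE G) \<and>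
     distinct (ginG G) \<and> distinct (goutG G) \<and>
     set (ginG G) \<subseteq> gE G \<and> set (goutG G) \<subseteq> gE G \<and>
     \<comment> \<open>each edge has exactly one source end (a vertex output or a global input)\<close>
     (\<forall>e\<in>gE G. (if e \<in> set (ginG G) then 1 else 0) + card {v \<in> gV G. e \<in> set (gout G v)} = (1::nat)) \<and>
     \<comment> \<open>each edge has exactly one target end (a vertex input or a global output)\<close>
     (\<forall>e\<in>gE G. (if e \<in> set (goutG G) then 1 else 0) + card {v \<in> gV G. e \<in> set (gin G v)} = (1::nat)) \<and>
     \<comment> \<open>connected\<close>
     (\<forall>x \<in> Inl ` gV G \<union> Inr ` gE G. \<forall>y \<in> Inl ` gV G \<union> Inr ` gE G.
         (x, y) \<in> (incidence G \<union> (incidence G)\<inverse>)\<^sup>*) \<and>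
     \<comment> \<open>no directed cycles\<close>
     acyclic (vadj G)"

definition graph_iso :: "('v1, 'e1) graph \<Rightarrow> ('v2, 'e2) graph \<Rightarrow> ('v1 \<Rightarrow> 'v2) \<Rightarrow> ('e1 \<Rightarrow> 'e2) \<Rightarrow> bool" where
  "graph_iso G1 G2 \<alpha> \<beta> \<longleftrightarrow>
     bij_betw \<alpha> (gV G1) (gV G2) \<and> bij_betw \<beta> (gE G1) (gE G2) \<and>
     (\<forall>v\<in>gV G1. gin G2 (\<alpha> v) = map \<beta> (gin G1 v) \<and> gout G2 (\<alpha> v) = map \<beta> (gout G1 v)) \<and>
     ginG G2 = map \<beta> (ginG G1) \<and> goutG G2 = map \<beta> (goutG G1)"

text \<open>The i-th input (output) of L v is identified
with the i-th input (output) of v.  When L v is the exceptional edge (no vertices), its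
input and output edge of H get identified; hence the edges of H are quotiented by the
equivalence relation generated by these identifications.\<close>

definition collapse_rel :: "('v, 'e) graph \<Rightarrow> ('v \<Rightarrow> ('a, 'b) graph) \<Rightarrow> 'e rel" where
  "collapse_rel H L =
     (let S = {(hd (gin H v), hd (gout H v)) | v. v \<in> gV H \<and> gV (L v) = {}} in (S \<union> S\<inverse>)\<^sup>*)"

definition sub_edge :: "('v, 'e) graph \<Rightarrow> ('v \<Rightarrow> ('a, 'b) graph) \<Rightarrow> 'v \<Rightarrow> 'b \<Rightarrow> 'e set + ('v \<times> 'b)" where
  "sub_edge H L v b =
     (case map_of (zip (ginG (L v)) (gin H v)) b of
        Some e \<Rightarrow> Inl (collapse_rel H L `` {e})
      | None \<Rightarrow> (case map_of (zip (goutG (L v)) (gout H v)) b of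
                   Some e \<Rightarrow> Inl (collapse_rel H L `` {e})
                 | None \<Rightarrow> Inr (v, b)))"

definition subst :: "('v, 'e) graph \<Rightarrow> ('v \<Rightarrow> ('a, 'b) graph) \<Rightarrow> ('v \<times> 'a, 'e set + ('v \<times> 'b)) graph" where
  "subst H L =
     \<lparr> gV = Sigma (gV H) (\<lambda>v. gV (L v)),
       gE = (\<lambda>e. Inl (collapse_rel H L `` {e})) ` gE H \<union>
            {Inr (v, b) | v b. v \<in> gV H \<and> b \<in> gE (L v) \<and> b \<notin> set (ginG (L v)) \<and> b \<notin> set (goutG (L v))},
       gin = (\<lambda>(v, u). map (sub_edge H L v) (gin (L v) u)),
       gout = (\<lambda>(v, u). map (sub_edge H L v) (gout (L v) u)),
       ginG = map (\<lambda>e. Inl (collapse_rel H L `` {e})) (ginG H),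
       goutG = map (\<lambda>e. Inl (collapse_rel H L `` {e})) (goutG H) \<rparr>"

record ('a, 'b, 'v, 'e) decgraph =
  dg   :: "('a, 'b) graph"
  dcol :: "'b \<Rightarrow> 'e"
  dvt  :: "'a \<Rightarrow> 'v"

definition decorated :: "('v, 'e) graph \<Rightarrow> ('a, 'b, 'v, 'e) decgraph \<Rightarrow> bool" where
  "decorated G D \<longleftrightarrow> wf_graph (dg D) \<and>
     (\<forall>b\<in>gE (dg D). dcol D b \<in> gE G) \<and>
     (\<forall>u\<in>gV (dg D). dvt D u \<in> gV G \<and>
        map (dcol D) (gin (dg D) u) = gin G (dvt D u) \<and>
        map (dcol D) (gout (dg D) u) = gout G (dvt D u))"

definition gamma_op :: "('v, 'e) graph \<Rightarrow> 'e list \<Rightarrow> 'e list \<Rightarrow> ('a, 'b, 'v, 'e) decgraph \<Rightarrow> bool" where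
  "gamma_op G cs ds D \<longleftrightarrow> decorated G D \<and>
     map (dcol D) (ginG (dg D)) = cs \<and> map (dcol D) (goutG (dg D)) = ds"

text \<open>Isomorphism of decorated graphs (operations of Gamma(G) are isomorphism classes).\<close>
definition dec_iso :: "('a1, 'b1, 'v, 'e) decgraph \<Rightarrow> ('a2, 'b2, 'v, 'e) decgraph \<Rightarrow> bool" where
  "dec_iso D1 D2 \<longleftrightarrow> (\<exists>\<alpha> \<beta>. graph_iso (dg D1) (dg D2) \<alpha> \<beta> \<and>
     (\<forall>b\<in>gE (dg D1). dcol D2 (\<beta> b) = dcol D1 b) \<and>
     (\<forall>u\<in>gV (dg D1). dvt D2 (\<alpha> u) = dvt D1 u))"

text \<open>A properad morphism Gamma(H) -> Gamma(G), given by f0 on edges and f1 on vertices.\<close>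
definition properad_morphism ::
  "('vH, 'eH) graph \<Rightarrow> ('vG, 'eG) graph \<Rightarrow> ('eH \<Rightarrow> 'eG) \<Rightarrow> ('vH \<Rightarrow> ('a, 'b, 'vG, 'eG) decgraph) \<Rightarrow> bool" where
  "properad_morphism H G f0 f1 \<longleftrightarrow>
     (\<forall>e\<in>gE H. f0 e \<in> gE G) \<and>
     (\<forall>v\<in>gV H. gamma_op G (map f0 (gin H v)) (map f0 (gout H v)) (f1 v))"

definition image_dg ::
  "('vH, 'eH) graph \<Rightarrow> ('eH \<Rightarrow> 'eG) \<Rightarrow> ('vH \<Rightarrow> ('a, 'b, 'vG, 'eG) decgraph)
     \<Rightarrow> ('vH \<times> 'a, 'eH set + ('vH \<times> 'b), 'vG, 'eG) decgraph" where
  "image_dg H f0 f1 =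
     \<lparr> dg = subst H (\<lambda>v. dg (f1 v)),
       dcol = (\<lambda>x. case x of Inl C \<Rightarrow> f0 (SOME e. e \<in> C) | Inr (v, b) \<Rightarrow> dcol (f1 v) b),
       dvt = (\<lambda>(v, u). dvt (f1 v) u) \<rparr>"

text \<open>A G-decorated graph M is (identified via its decorations with) a subgraph of G if
there is a graph substitution G = K{L_v} (up to isomorphism) with L_w = M (up to isomorphism)
for some vertex w of K, such that the resulting embedding of M into G is given by the
decorations of M.  Finite graphs are taken with natural-number labels, which is no loss of
generality.\<close>
definition is_subgraph :: "('vG, 'eG) graph \<Rightarrow> ('a, 'b, 'vG, 'eG) decgraph \<Rightarrow> bool" where
  "is_subgraph G M \<longleftrightarrow>
     (\<exists>(K :: (nat, nat) graph) (L :: nat \<Rightarrow> (nat, nat) graph) w \<alpha> \<beta> \<alpha>' \<beta>'.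
        wf_graph K \<and> w \<in> gV K \<and>
        (\<forall>v\<in>gV K. wf_graph (L v) \<and> length (ginG (L v)) = length (gin K v) \<and>
                    length (goutG (L v)) = length (gout K v)) \<and>
        graph_iso (dg M) (L w) \<alpha>' \<beta>' \<and>
        graph_iso (subst K L) G \<alpha> \<beta> \<and>
        (\<forall>b\<in>gE (dg M). \<beta> (sub_edge K L w (\<beta>' b)) = dcol M b) \<and>
        (\<forall>u\<in>gV (dg M). \<alpha> (w, \<alpha>' u) = dvt M u))"

end

theory Submission
  imports Defs
begin

text \<open>If the image of \<open>f\<close> is a subgraph of \<open>G\<close>, its decorations are injective, and hence so
  are the decorations of each \<open>f\<^sub>1 v\<close>, which sits inside the image.  An injectively
  decorated connected graph \<open>D\<close> is determined up to isomorphism by the colours of its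
  boundary: starting from a boundary edge and walking along incidences of \<open>D\<close>, every
  vertex and edge of \<open>D\<close> is matched with one of any other decorated graph \<open>D'\<close> with the same
  boundary colours, because each edge of \<open>G\<close> has a unique source and a unique target
  (without boundary, \<open>D'\<close> covers all of the connected graph \<open>G\<close>).  So \<open>f\<^sub>1 v\<close> and \<open>f'\<^sub>1 v\<close>
  have the same image in \<open>G\<close>, and the two embeddings of that image give the isomorphism.\<close>

lemma wf_graphD:
  assumes "wf_graph G"
  shows wf_graph_finite: "finite (gV G)" "finite (gE G)"
    and wf_graph_nonempty: "gV G \<noteq> {} \<or> gE G \<noteq> {}"
    and wf_graph_vertex: "\<And>v. v \<in> gV G \<Longrightarrow> distinct (gin G v) \<and> distinct (gout G v) \<and>
          set (gin G v) \<subseteq> gE G \<and> set (gout G v) \<subseteq> gE G"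
    and wf_graph_boundary: "distinct (ginG G)" "distinct (goutG G)"
          "set (ginG G) \<subseteq> gE G" "set (goutG G) \<subseteq> gE G"
    and wf_graph_target: "\<And>e. e \<in> gE G \<Longrightarrow>
          (if e \<in> set (goutG G) then 1 else 0) + card {v \<in> gV G. e \<in> set (gin G v)} = (1::nat)"
    and wf_graph_connected: "\<And>x y. x \<in> Inl ` gV G \<union> Inr ` gE G \<Longrightarrow> y \<in> Inl ` gV G \<union> Inr ` gE G \<Longrightarrow>
          (x, y) \<in> (incidence G \<union> (incidence G)\<inverse>)\<^sup>*"
    and wf_graph_acyclic: "acyclic (vadj G)"
  using assms unfolding wf_graph_def by (simp_all only:)

lemma wf_graph_in_edge:
  "wf_graph G \<Longrightarrow> v \<in> gV G \<Longrightarrow> e \<in> set (gin G v) \<Longrightarrow> e \<in> gE G"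
  using wf_graph_vertex by fast

lemma wf_graph_target_cases:
  assumes "wf_graph G" "e \<in> gE G"
  obtains "e \<in> set (goutG G)" "\<forall>v\<in>gV G. e \<notin> set (gin G v)"
    | v where "e \<notin> set (goutG G)" "v \<in> gV G" "e \<in> set (gin G v)"
        "\<forall>v'\<in>gV G. e \<in> set (gin G v') \<longrightarrow> v' = v"
proof -
  let ?T = "{v \<in> gV G. e \<in> set (gin G v)}"
  have "(if e \<in> set (goutG G) then 1 else 0) + card ?T = (1::nat)"
    using wf_graph_target[OF assms] .
  moreover have "finite ?T" using wf_graph_finite(1)[OF assms(1)] by simp
  ultimately show thesis
  proof (cases "e \<in> set (goutG G)")
    case True
    with \<open>_ = 1\<close> \<open>finite ?T\<close> show thesis using that(1) by simp
  next
    case False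
    with \<open>_ = 1\<close> obtain v where "?T = {v}" by (auto simp: card_1_singleton_iff)
    then show thesis using that(2) False by blast
  qed
qed

lemma wf_graph_in_unique:
  assumes "wf_graph G" "v \<in> gV G" "v' \<in> gV G" "e \<in> set (gin G v)" "e \<in> set (gin G v')"
  shows "v = v'"
  using wf_graph_target_cases[OF assms(1) wf_graph_in_edge[OF assms(1,2,4)]] assms by metis

lemma wf_graph_in_not_outG:
  assumes "wf_graph G" "v \<in> gV G" "e \<in> set (gin G v)"
  shows "e \<notin> set (goutG G)"
  using wf_graph_target_cases[OF assms(1) wf_graph_in_edge[OF assms]] assms(2,3) by metis

lemma wf_graph_in_exists:
  assumes "wf_graph G" "e \<in> gE G" "e \<notin> set (goutG G)"
  obtains v where "v \<in> gV G" "e \<in> set (gin G v)"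
  using wf_graph_target_cases[OF assms(1,2)] assms(3) by metis

definition reverse_graph :: "('v, 'e) graph \<Rightarrow> ('v, 'e) graph" where
  "reverse_graph G = G\<lparr>gin := gout G, gout := gin G, ginG := goutG G, goutG := ginG G\<rparr>"

lemma reverse_graph_simps [simp]:
  "gV (reverse_graph G) = gV G" "gE (reverse_graph G) = gE G"
  "gin (reverse_graph G) = gout G" "gout (reverse_graph G) = gin G"
  "ginG (reverse_graph G) = goutG G" "goutG (reverse_graph G) = ginG G"
  by (simp_all add: reverse_graph_def)

lemma incidence_reverse_graph [simp]: "incidence (reverse_graph G) = incidence G"
  unfolding incidence_def by auto

lemma vadj_reverse_graph [simp]: "vadj (reverse_graph G) = (vadj G)\<inverse>"
  unfolding vadj_def by auto

lemma wf_graph_reverse_graph [simp]: "wf_graph (reverse_graph G) \<longleftrightarrow> wf_graph G"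
  unfolding wf_graph_def by (simp add: conj_ac)

lemma wf_graph_out_unique:
  assumes "wf_graph G" "v \<in> gV G" "v' \<in> gV G" "e \<in> set (gout G v)" "e \<in> set (gout G v')"
  shows "v = v'"
  using wf_graph_in_unique[of "reverse_graph G"] assms by simp

lemma wf_graph_out_exists:
  assumes "wf_graph G" "e \<in> gE G" "e \<notin> set (ginG G)"
  obtains v where "v \<in> gV G" "e \<in> set (gout G v)"
  using wf_graph_in_exists[of "reverse_graph G" e] assms by auto

lemma wf_graph_connected_induct:
  assumes "wf_graph G" "x \<in> Inl ` gV G \<union> Inr ` gE G" "P x"
    and incidence_invariant: "\<And>x y. (x, y) \<in> incidence G \<Longrightarrow> P x \<longleftrightarrow> P y"
    and "y \<in> Inl ` gV G \<union> Inr ` gE G"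
  shows "P y"
  using wf_graph_connected[OF assms(1,2,5)]
  by (induction rule: rtrancl_induct) (use assms(3) incidence_invariant in blast)+

lemma incidenceE:
  assumes "(x, y) \<in> incidence G"
  obtains v e where "x = Inl v" "y = Inr e" "v \<in> gV G" "e \<in> set (gin G v) \<or> e \<in> set (gout G v)"
  using assms unfolding incidence_def by blast

lemma distinct_set_singleton: "distinct xs \<Longrightarrow> set xs = {x} \<Longrightarrow> xs = [x]"
  by (metis distinct_card card_1_singleton_iff length_0_conv length_Suc_conv
      list.set_intros(1) list.size(3) empty_iff insert_iff set_empty2)

lemma wf_graph_no_vertices:
  assumes "wf_graph G" "gV G = {}"
  obtains e where "gE G = {e}" "ginG G = [e]" "goutG G = [e]"
proof -
  have "incidence G = {}" using assms(2) unfolding incidence_def by auto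
  then have "e = e'" if "e \<in> gE G" "e' \<in> gE G" for e e'
    using wf_graph_connected[OF assms(1), of "Inr e" "Inr e'"] that by simp
  moreover have "gE G \<noteq> {}" using wf_graph_nonempty[OF assms(1)] assms(2) by simp
  ultimately obtain e where E: "gE G = {e}" by blast
  have "e \<in> set (ginG G)" using wf_graph_out_exists[OF assms(1), of e] E assms(2) by blast
  moreover have "e \<in> set (goutG G)" using wf_graph_in_exists[OF assms(1), of e] E assms(2) by blast
  ultimately have "ginG G = [e]" "goutG G = [e]"
    using wf_graph_boundary[OF assms(1)] E by (auto intro: distinct_set_singleton)
  with E show thesis by (rule that)
qed

lemma vadjI: "u \<in> gV G \<Longrightarrow> w \<in> gV G \<Longrightarrow> e \<in> set (gout G u) \<Longrightarrow> e \<in> set (gin G w) \<Longrightarrow> (u, w) \<in> vadj G"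
  unfolding vadj_def by blast

lemma wf_graph_in_out_disjoint:
  assumes "wf_graph G" "v \<in> gV G"
  shows "set (gin G v) \<inter> set (gout G v) = {}"
  using vadjI[OF assms(2,2)] wf_graph_acyclic[OF assms(1)] by (auto simp: acyclic_def)

section \<open>Collapsing exceptional edges in a substitution\<close>

lemma single_valued_conversion_join:
  assumes "single_valued S" "(a, c) \<in> (S \<union> S\<inverse>)\<^sup>*"
  shows "\<exists>m. (a, m) \<in> S\<^sup>* \<and> (c, m) \<in> S\<^sup>*"
  using assms(2)
proof (induction rule: rtrancl_induct)
  case base
  then show ?case by blast
next
  case (step b c)
  then obtain m where m: "(a, m) \<in> S\<^sup>*" "(b, m) \<in> S\<^sup>*" by blast
  show ?case
  proof (cases "(b, c) \<in> S")
    case bc: True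
    from m(2) show ?thesis
    proof (cases rule: converse_rtranclE)
      case base
      with m(1) bc show ?thesis by (meson rtrancl.rtrancl_into_rtrancl rtrancl_refl)
    next
      case (step b')
      with bc assms(1) have "b' = c" by (auto dest: single_valuedD)
      with step m(1) show ?thesis by blast
    qed
  next
    case False
    then have "(c, b) \<in> S" using step.hyps(2) by blast
    with m show ?thesis by (meson converse_rtrancl_into_rtrancl)
  qed
qed

definition collapse_step :: "('v, 'e) graph \<Rightarrow> ('v \<Rightarrow> ('a, 'b) graph) \<Rightarrow> 'e rel" where
  "collapse_step K L = {(hd (gin K v), hd (gout K v)) | v. v \<in> gV K \<and> gV (L v) = {}}"

lemma collapse_rel_eq: "collapse_rel K L = (collapse_step K L \<union> (collapse_step K L)\<inverse>)\<^sup>*"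
  unfolding collapse_rel_def collapse_step_def Let_def by simp

definition port :: "('v, 'e) graph \<Rightarrow> ('v \<Rightarrow> ('a, 'b) graph) \<Rightarrow> 'v \<Rightarrow> 'b \<Rightarrow> 'e option" where
  "port K L w b = (case map_of (zip (ginG (L w)) (gin K w)) b of
       Some e \<Rightarrow> Some e
     | None \<Rightarrow> map_of (zip (goutG (L w)) (gout K w)) b)"

lemma sub_edge_port:
  "sub_edge K L w b = (case port K L w b of
       Some e \<Rightarrow> Inl (collapse_rel K L `` {e})
     | None \<Rightarrow> Inr (w, b))"
  unfolding sub_edge_def port_def by (auto split: option.splits)

locale graph_substitution =
  fixes K :: "('v, 'e) graph" and L :: "'v \<Rightarrow> ('a, 'b) graph"
  assumes wf_K: "wf_graph K"
    and wf_L: "\<And>v. v \<in> gV K \<Longrightarrow> wf_graph (L v)"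
    and length_ginG: "\<And>v. v \<in> gV K \<Longrightarrow> length (ginG (L v)) = length (gin K v)"
    and length_goutG: "\<And>v. v \<in> gV K \<Longrightarrow> length (goutG (L v)) = length (gout K v)"
begin

lemma collapse_stepE:
  assumes "(a, c) \<in> collapse_step K L"
  obtains v where "v \<in> gV K" "gV (L v) = {}" "gin K v = [a]" "gout K v = [c]"
proof -
  obtain v where v: "v \<in> gV K" "gV (L v) = {}" "a = hd (gin K v)" "c = hd (gout K v)"
    using assms unfolding collapse_step_def by blast
  obtain b where "ginG (L v) = [b]" "goutG (L v) = [b]"
    using wf_graph_no_vertices[OF wf_L[OF v(1)] v(2)] by blast
  then have "length (gin K v) = 1" "length (gout K v) = 1"
    using length_ginG[OF v(1)] length_goutG[OF v(1)] by simp_all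
  with v show thesis by (auto intro: that simp: length_Suc_conv)
qed

lemma single_valued_collapse_step: "single_valued (collapse_step K L)"
proof (rule single_valuedI)
  fix a c c' assume "(a, c) \<in> collapse_step K L" "(a, c') \<in> collapse_step K L"
  then obtain v v' where "v \<in> gV K" "gin K v = [a]" "gout K v = [c]"
    and "v' \<in> gV K" "gin K v' = [a]" "gout K v' = [c']"
    by (elim collapse_stepE)
  then show "c = c'" using wf_graph_in_unique[OF wf_K, of v v' a] by auto
qed

lemma single_valued_converse_collapse_step: "single_valued ((collapse_step K L)\<inverse>)"
proof (rule single_valuedI)
  fix c a a' assume "(c, a) \<in> (collapse_step K L)\<inverse>" "(c, a') \<in> (collapse_step K L)\<inverse>"
  then have "(a, c) \<in> collapse_step K L" "(a', c) \<in> collapse_step K L" by simp_all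
  then obtain v v' where "v \<in> gV K" "gin K v = [a]" "gout K v = [c]"
    and "v' \<in> gV K" "gin K v' = [a']" "gout K v' = [c]"
    by (elim collapse_stepE)
  then show "a = a'" using wf_graph_out_unique[OF wf_K, of v v' c] by auto
qed

lemma collapse_step_not_from_in:
  assumes "w \<in> gV K" "gV (L w) \<noteq> {}" "e \<in> set (gin K w)"
  shows "(e, e') \<notin> collapse_step K L"
proof
  assume "(e, e') \<in> collapse_step K L"
  then obtain v where "v \<in> gV K" "gV (L v) = {}" "gin K v = [e]" by (elim collapse_stepE)
  with assms wf_graph_in_unique[OF wf_K, of v w e] show False by auto
qed

lemma collapse_step_not_to_out:
  assumes "w \<in> gV K" "gV (L w) \<noteq> {}" "e \<in> set (gout K w)"
  shows "(e', e) \<notin> collapse_step K L"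
proof
  assume "(e', e) \<in> collapse_step K L"
  then obtain v where "v \<in> gV K" "gV (L v) = {}" "gout K v = [e]" by (elim collapse_stepE)
  with assms wf_graph_out_unique[OF wf_K, of v w e] show False by auto
qed

lemma collapse_step_trancl_vadj:
  assumes "(a, c) \<in> (collapse_step K L)\<^sup>+" "u \<in> gV K" "a \<in> set (gout K u)"
  shows "\<exists>x\<in>gV K. c \<in> set (gout K x) \<and> (u, x) \<in> (vadj K)\<^sup>+"
  using assms(1)
proof (induction rule: trancl_induct)
  case (base c)
  then obtain x where x: "x \<in> gV K" "gin K x = [a]" "gout K x = [c]" by (elim collapse_stepE)
  with vadjI[OF assms(2) x(1) assms(3)] show ?case by (metis list.set_intros(1) r_into_trancl)
next
  case (step b c)
  then obtain x where x: "x \<in> gV K" "b \<in> set (gout K x)" "(u, x) \<in> (vadj K)\<^sup>+" by blast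
  from step.hyps(2) obtain y where y: "y \<in> gV K" "gin K y = [b]" "gout K y = [c]"
    by (elim collapse_stepE)
  with vadjI[OF x(1) y(1) x(2)] x(3) show ?case by (metis list.set_intros(1) trancl_into_trancl)
qed

text \<open>A chain of exceptional edges from an output of \<open>w\<close> to an input of \<open>w\<close> would be a
  directed cycle through \<open>w\<close>.\<close>

lemma collapse_conversion_not_out_to_in:
  assumes w: "w \<in> gV K" "gV (L w) \<noteq> {}"
    and a: "a \<in> set (gin K w)" and c: "c \<in> set (gout K w)"
  shows "(c, a) \<notin> (collapse_step K L \<union> (collapse_step K L)\<inverse>)\<^sup>*"
proof
  let ?S = "collapse_step K L"
  assume "(c, a) \<in> (?S \<union> ?S\<inverse>)\<^sup>*"
  then obtain m where m: "(c, m) \<in> ?S\<^sup>*" "(a, m) \<in> ?S\<^sup>*"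
    using single_valued_conversion_join[OF single_valued_collapse_step] by blast
  from m(2) have "m = a"
    by (cases rule: converse_rtranclE) (use collapse_step_not_from_in[OF w a] in blast)+
  moreover have "c \<noteq> a" using wf_graph_in_out_disjoint[OF wf_K w(1)] a c by blast
  ultimately have "(c, a) \<in> ?S\<^sup>+" using m(1) by (auto dest: rtranclD)
  then obtain x where "x \<in> gV K" "a \<in> set (gout K x)" "(w, x) \<in> (vadj K)\<^sup>+"
    using collapse_step_trancl_vadj w(1) c by blast
  with vadjI[OF _ w(1) _ a] have "(w, w) \<in> (vadj K)\<^sup>+" by (meson trancl_into_trancl)
  with wf_graph_acyclic[OF wf_K] show False by (simp add: acyclic_def)
qed

lemma collapse_rel_ports_eq:
  assumes w: "w \<in> gV K" "gV (L w) \<noteq> {}"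
    and e: "e \<in> set (gin K w) \<union> set (gout K w)" "e' \<in> set (gin K w) \<union> set (gout K w)"
    and "(e, e') \<in> collapse_rel K L"
  shows "e = e'"
proof -
  let ?S = "collapse_step K L"
  have conv: "(e, e') \<in> (?S \<union> ?S\<inverse>)\<^sup>*"
    using assms(5) unfolding collapse_rel_eq .
  then have conv': "(e', e) \<in> (?S \<union> ?S\<inverse>)\<^sup>*"
    by (metis converse_Un converse_converse rtrancl_converseI sup_commute)
  consider "e \<in> set (gin K w)" "e' \<in> set (gin K w)" | "e \<in> set (gout K w)" "e' \<in> set (gout K w)"
    | "e \<in> set (gin K w)" "e' \<in> set (gout K w)" | "e \<in> set (gout K w)" "e' \<in> set (gin K w)"
    using e by blast
  then show ?thesis
  proof cases
    case 1
    obtain m where "(e, m) \<in> ?S\<^sup>*" "(e', m) \<in> ?S\<^sup>*"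
      using single_valued_conversion_join[OF single_valued_collapse_step conv] by blast
    then show ?thesis using collapse_step_not_from_in[OF w] 1
      by (metis converse_rtranclE)
  next
    case 2
    have "(e, e') \<in> (?S\<inverse> \<union> (?S\<inverse>)\<inverse>)\<^sup>*" using conv by (simp add: sup_commute)
    then obtain m where "(e, m) \<in> (?S\<inverse>)\<^sup>*" "(e', m) \<in> (?S\<inverse>)\<^sup>*"
      using single_valued_conversion_join[OF single_valued_converse_collapse_step] by blast
    then show ?thesis using collapse_step_not_to_out[OF w] 2
      by (metis converse_rtranclE converseD)
  qed (use collapse_conversion_not_out_to_in[OF w] conv conv' in blast)+
qed

lemma port_None_iff:
  assumes "w \<in> gV K"
  shows "port K L w b = None \<longleftrightarrow> b \<notin> set (ginG (L w)) \<and> b \<notin> set (goutG (L w))"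
  using map_of_zip_is_None[OF length_ginG[OF assms]] map_of_zip_is_None[OF length_goutG[OF assms]]
  unfolding port_def by (auto split: option.split dest: map_of_SomeD set_zip_leftD)

lemma port_SomeE:
  assumes w: "w \<in> gV K" and "port K L w b = Some e"
  obtains i where "i < length (gin K w)" "ginG (L w) ! i = b" "gin K w ! i = e"
    | i where "b \<notin> set (ginG (L w))" "i < length (gout K w)" "goutG (L w) ! i = b" "gout K w ! i = e"
proof (cases "b \<in> set (ginG (L w))")
  case True
  then obtain i where i: "i < length (ginG (L w))" "ginG (L w) ! i = b"
    by (auto simp: in_set_conv_nth)
  with wf_graph_boundary(1)[OF wf_L[OF w]] length_ginG[OF w]
  have "map_of (zip (ginG (L w)) (gin K w)) b = Some (gin K w ! i)"
    by (metis map_of_zip_nth)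
  with assms i length_ginG[OF w] show thesis by (intro that(1)) (auto simp: port_def)
next
  case False
  then have "b \<in> set (goutG (L w))"
    using assms port_None_iff[OF w] by (metis option.distinct(1))
  then obtain i where i: "i < length (goutG (L w))" "goutG (L w) ! i = b"
    by (auto simp: in_set_conv_nth)
  with wf_graph_boundary(2)[OF wf_L[OF w]] length_goutG[OF w]
  have "map_of (zip (goutG (L w)) (gout K w)) b = Some (gout K w ! i)"
    by (metis map_of_zip_nth)
  moreover have "map_of (zip (ginG (L w)) (gin K w)) b = None"
    using False length_ginG[OF w] by simp
  ultimately show thesis using assms i False length_goutG[OF w]
    by (intro that(2)) (auto simp: port_def)
qed

lemma port_mem:
  assumes "w \<in> gV K" "port K L w b = Some e"
  shows "e \<in> set (gin K w) \<union> set (gout K w)"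
  using assms by (elim port_SomeE) auto

lemma port_inj:
  assumes w: "w \<in> gV K" and "port K L w b = Some e" "port K L w b' = Some e"
  shows "b = b'"
proof -
  have "distinct (gin K w)" "distinct (gout K w)" using wf_graph_vertex[OF wf_K w] by auto
  moreover have "set (gin K w) \<inter> set (gout K w) = {}" using wf_graph_in_out_disjoint[OF wf_K w] .
  ultimately show ?thesis
    using assms(2,3) length_ginG[OF w] length_goutG[OF w]
    by (elim port_SomeE[OF w]) (metis disjoint_iff nth_mem nth_eq_iff_index_eq)+
qed

lemma sub_edge_inj_on:
  assumes w: "w \<in> gV K"
  shows "inj_on (sub_edge K L w) (gE (L w))"
proof (cases "gV (L w) = {}")
  case True
  then obtain b where "gE (L w) = {b}" using wf_graph_no_vertices wf_L[OF w] by metis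
  then show ?thesis by simp
next
  case False
  show ?thesis
  proof (rule inj_onI)
    fix b b' assume eq: "sub_edge K L w b = sub_edge K L w b'"
    then consider "port K L w b = None" "port K L w b' = None"
      | e e' where "port K L w b = Some e" "port K L w b' = Some e'"
          "collapse_rel K L `` {e} = collapse_rel K L `` {e'}"
      by (auto simp: sub_edge_port split: option.splits)
    then show "b = b'"
    proof cases
      case 1
      with eq show ?thesis by (simp add: sub_edge_port)
    next
      case (2 e e')
      have "(e', e') \<in> collapse_rel K L" by (simp add: collapse_rel_eq)
      with 2(3) have "(e, e') \<in> collapse_rel K L" by blast
      with 2 have "e = e'" using collapse_rel_ports_eq[OF w False] port_mem[OF w] by blast
      with 2 show ?thesis using port_inj[OF w] by blast
    qed
  qed
qed

lemma sub_edge_in_subst: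
  assumes w: "w \<in> gV K" and "b \<in> gE (L w)"
  shows "sub_edge K L w b \<in> gE (subst K L)"
proof (cases "port K L w b")
  case None
  moreover from None have "b \<notin> set (ginG (L w))" "b \<notin> set (goutG (L w))"
    using port_None_iff[OF w] by simp_all
  ultimately show ?thesis using assms by (auto simp: sub_edge_port subst_def)
next
  case (Some e)
  with port_mem[OF w] wf_graph_vertex[OF wf_K w] have "e \<in> gE K" by blast
  with Some show ?thesis by (auto simp: sub_edge_port subst_def)
qed

end

section \<open>Images that are subgraphs are injectively decorated\<close>

definition injectively_decorated :: "('a, 'b, 'v, 'e) decgraph \<Rightarrow> bool" where
  "injectively_decorated D \<longleftrightarrow> inj_on (dcol D) (gE (dg D)) \<and> inj_on (dvt D) (gV (dg D))"

lemma is_subgraph_injectively_decorated: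
  assumes "is_subgraph G M"
  shows "injectively_decorated M"
proof -
  obtain K :: "(nat, nat) graph" and L :: "nat \<Rightarrow> (nat, nat) graph" and w \<alpha> \<beta> \<alpha>' \<beta>' where
    K: "wf_graph K" "w \<in> gV K"
    and L: "\<forall>v\<in>gV K. wf_graph (L v) \<and> length (ginG (L v)) = length (gin K v) \<and>
              length (goutG (L v)) = length (gout K v)"
    and iso_M: "graph_iso (dg M) (L w) \<alpha>' \<beta>'"
    and iso_G: "graph_iso (subst K L) G \<alpha> \<beta>"
    and dcol_M: "\<forall>b\<in>gE (dg M). \<beta> (sub_edge K L w (\<beta>' b)) = dcol M b"
    and dvt_M: "\<forall>u\<in>gV (dg M). \<alpha> (w, \<alpha>' u) = dvt M u"
    using assms unfolding is_subgraph_def by blast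
  interpret graph_substitution K L using K L by unfold_locales auto
  have "inj_on (\<beta> \<circ> sub_edge K L w \<circ> \<beta>') (gE (dg M))"
  proof (intro comp_inj_on)
    show "inj_on \<beta>' (gE (dg M))" "inj_on (sub_edge K L w) (\<beta>' ` gE (dg M))"
      using iso_M sub_edge_inj_on[OF K(2)] by (auto simp: graph_iso_def bij_betw_def)
    have "sub_edge K L w ` \<beta>' ` gE (dg M) \<subseteq> gE (subst K L)"
      using iso_M sub_edge_in_subst[OF K(2)] by (auto simp: graph_iso_def bij_betw_def)
    then show "inj_on \<beta> (sub_edge K L w ` \<beta>' ` gE (dg M))"
      using iso_G by (auto simp: graph_iso_def bij_betw_def intro: inj_on_subset)
  qed
  then have "inj_on (dcol M) (gE (dg M))"
    using dcol_M by (simp add: inj_on_def)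
  moreover have "inj_on (\<alpha> \<circ> Pair w \<circ> \<alpha>') (gV (dg M))"
  proof (intro comp_inj_on)
    show "inj_on \<alpha>' (gV (dg M))" "inj_on (Pair w) (\<alpha>' ` gV (dg M))"
      using iso_M by (auto simp: graph_iso_def bij_betw_def inj_on_def)
    have "Pair w ` \<alpha>' ` gV (dg M) \<subseteq> gV (subst K L)"
      using iso_M K(2) by (auto simp: graph_iso_def bij_betw_def subst_def)
    then show "inj_on \<alpha> (Pair w ` \<alpha>' ` gV (dg M))"
      using iso_G by (auto simp: graph_iso_def bij_betw_def intro: inj_on_subset)
  qed
  then have "inj_on (dvt M) (gV (dg M))"
    using dvt_M by (simp add: inj_on_def)
  ultimately show ?thesis unfolding injectively_decorated_def ..
qed

lemma properad_morphismD:
  assumes "properad_morphism H G f0 f1" "v \<in> gV H"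
  shows "decorated G (f1 v)"
    and "map (dcol (f1 v)) (ginG (dg (f1 v))) = map f0 (gin H v)"
    and "map (dcol (f1 v)) (goutG (dg (f1 v))) = map f0 (gout H v)"
  using assms unfolding properad_morphism_def gamma_op_def by auto

lemma properad_morphism_graph_substitution:
  assumes "wf_graph H" "properad_morphism H G f0 f1"
  shows "graph_substitution H (\<lambda>v. dg (f1 v))"
proof
  fix v assume v: "v \<in> gV H"
  show "wf_graph (dg (f1 v))"
    using properad_morphismD(1)[OF assms(2) v] by (simp add: decorated_def)
  show "length (ginG (dg (f1 v))) = length (gin H v)" "length (goutG (dg (f1 v))) = length (gout H v)"
    using properad_morphismD(2,3)[OF assms(2) v] by (metis length_map)+
qed (fact assms(1))

lemma properad_morphism_collapse_rel:
  assumes "wf_graph H" "properad_morphism H G f0 f1"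
    and "(e, e') \<in> collapse_rel H (\<lambda>v. dg (f1 v))"
  shows "f0 e = f0 e'"
proof -
  interpret graph_substitution H "\<lambda>v. dg (f1 v)"
    using properad_morphism_graph_substitution[OF assms(1,2)] .
  have "f0 a = f0 c" if "(a, c) \<in> collapse_step H (\<lambda>v. dg (f1 v))" for a c
  proof -
    from that obtain v where v: "v \<in> gV H" "gV (dg (f1 v)) = {}" "gin H v = [a]" "gout H v = [c]"
      by (elim collapse_stepE)
    moreover obtain b where "ginG (dg (f1 v)) = [b]" "goutG (dg (f1 v)) = [b]"
      using wf_graph_no_vertices[OF wf_L[OF v(1)] v(2)] by blast
    ultimately show ?thesis using properad_morphismD(2,3)[OF assms(2) v(1)] by simp
  qed
  with assms(3) show ?thesis unfolding collapse_rel_eq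
    by (induction rule: rtrancl_induct) auto
qed

lemma dcol_image_dg_sub_edge:
  assumes "wf_graph H" "properad_morphism H G f0 f1" "v \<in> gV H"
  shows "dcol (image_dg H f0 f1) (sub_edge H (\<lambda>v. dg (f1 v)) v b) = dcol (f1 v) b"
proof -
  interpret graph_substitution H "\<lambda>v. dg (f1 v)"
    using properad_morphism_graph_substitution[OF assms(1,2)] .
  show ?thesis
  proof (cases "port H (\<lambda>v. dg (f1 v)) v b")
    case None
    then show ?thesis by (simp add: sub_edge_port image_dg_def)
  next
    case (Some e)
    let ?C = "collapse_rel H (\<lambda>v. dg (f1 v)) `` {e}"
    have "e \<in> ?C" by (simp add: collapse_rel_eq)
    then have "(e, SOME e'. e' \<in> ?C) \<in> collapse_rel H (\<lambda>v. dg (f1 v))"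
      by (metis Image_singleton_iff someI)
    then have "f0 (SOME e'. e' \<in> ?C) = f0 e"
      using properad_morphism_collapse_rel[OF assms(1,2)] by metis
    moreover have "dcol (f1 v) b = f0 e"
      using Some properad_morphismD(2,3)[OF assms(2,3)] length_ginG[OF assms(3)] length_goutG[OF assms(3)]
      by (elim port_SomeE[OF assms(3)]) (metis nth_map)+
    ultimately show ?thesis using Some by (simp add: sub_edge_port image_dg_def)
  qed
qed

lemma injectively_decorated_image_dg_vertex:
  assumes "wf_graph H" "properad_morphism H G f0 f1" "injectively_decorated (image_dg H f0 f1)"
    and v: "v \<in> gV H"
  shows "injectively_decorated (f1 v)"
proof -
  interpret graph_substitution H "\<lambda>v. dg (f1 v)"
    using properad_morphism_graph_substitution[OF assms(1,2)] .
  let ?M = "image_dg H f0 f1"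
  have "inj_on (dcol ?M \<circ> sub_edge H (\<lambda>v. dg (f1 v)) v) (gE (dg (f1 v)))"
  proof (rule comp_inj_on)
    show "inj_on (sub_edge H (\<lambda>v. dg (f1 v)) v) (gE (dg (f1 v)))"
      using sub_edge_inj_on[OF v] .
    show "inj_on (dcol ?M) (sub_edge H (\<lambda>v. dg (f1 v)) v ` gE (dg (f1 v)))"
      using assms(3) sub_edge_in_subst[OF v]
      by (auto simp: injectively_decorated_def image_dg_def intro: inj_on_subset)
  qed
  then have "inj_on (dcol (f1 v)) (gE (dg (f1 v)))"
    using dcol_image_dg_sub_edge[OF assms(1,2) v] by (simp add: inj_on_def)
  moreover have "inj_on (dvt (f1 v)) (gV (dg (f1 v)))"
  proof (rule inj_onI)
    fix u u' assume "u \<in> gV (dg (f1 v))" "u' \<in> gV (dg (f1 v))" "dvt (f1 v) u = dvt (f1 v) u'"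
    then have "dvt ?M (v, u) = dvt ?M (v, u')" "(v, u) \<in> gV (dg ?M)" "(v, u') \<in> gV (dg ?M)"
      using v by (simp_all add: image_dg_def subst_def)
    moreover have "inj_on (dvt ?M) (gV (dg ?M))"
      using assms(3) by (simp add: injectively_decorated_def)
    ultimately show "u = u'" by (blast dest: inj_onD)
  qed
  ultimately show ?thesis unfolding injectively_decorated_def ..
qed

section \<open>Injectively decorated graphs are determined by their boundary\<close>

definition reverse_decgraph :: "('a, 'b, 'v, 'e) decgraph \<Rightarrow> ('a, 'b, 'v, 'e) decgraph" where
  "reverse_decgraph D = D\<lparr>dg := reverse_graph (dg D)\<rparr>"

lemma reverse_decgraph_simps [simp]:
  "dg (reverse_decgraph D) = reverse_graph (dg D)"
  "dcol (reverse_decgraph D) = dcol D" "dvt (reverse_decgraph D) = dvt D"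
  by (simp_all add: reverse_decgraph_def)

lemma decorated_reverse [simp]:
  "decorated (reverse_graph G) (reverse_decgraph D) \<longleftrightarrow> decorated G D"
  unfolding decorated_def by auto

lemma decoratedD:
  assumes "decorated G D"
  shows "wf_graph (dg D)"
    and "b \<in> gE (dg D) \<Longrightarrow> dcol D b \<in> gE G"
    and "u \<in> gV (dg D) \<Longrightarrow> dvt D u \<in> gV G"
    and "u \<in> gV (dg D) \<Longrightarrow> gin G (dvt D u) = map (dcol D) (gin (dg D) u)"
    and "u \<in> gV (dg D) \<Longrightarrow> gout G (dvt D u) = map (dcol D) (gout (dg D) u)"
  using assms unfolding decorated_def by auto

lemma decorated_in_edge_target:
  assumes "wf_graph G" "decorated G D"
    and "b \<in> gE (dg D)" "b \<notin> set (goutG (dg D))" "v \<in> gV G" "dcol D b \<in> set (gin G v)"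
  shows "v \<in> dvt D ` gV (dg D)"
proof -
  obtain u where u: "u \<in> gV (dg D)" "b \<in> set (gin (dg D) u)"
    using wf_graph_in_exists[OF decoratedD(1)[OF assms(2)] assms(3,4)] .
  then have "dcol D b \<in> set (gin G (dvt D u))" by (simp add: decoratedD(4)[OF assms(2)])
  with assms(1,5,6) u(1) have "v = dvt D u"
    using wf_graph_in_unique decoratedD(3)[OF assms(2)] by metis
  with u(1) show ?thesis by blast
qed

lemma decorated_out_edge_source:
  assumes "wf_graph G" "decorated G D"
    and "b \<in> gE (dg D)" "b \<notin> set (ginG (dg D))" "v \<in> gV G" "dcol D b \<in> set (gout G v)"
  shows "v \<in> dvt D ` gV (dg D)"
  using decorated_in_edge_target[of "reverse_graph G" "reverse_decgraph D"] assms by simp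

lemma decorated_without_boundary_covers:
  assumes G: "wf_graph G" and D: "decorated G D"
    and "ginG (dg D) = []" "goutG (dg D) = []"
  shows "gV G \<subseteq> dvt D ` gV (dg D)" "gE G \<subseteq> dcol D ` gE (dg D)"
proof -
  define P where "P x = (case x of Inl v \<Rightarrow> v \<in> dvt D ` gV (dg D) | Inr e \<Rightarrow> e \<in> dcol D ` gE (dg D))"
    for x
  obtain u where u: "u \<in> gV (dg D)"
    using wf_graph_no_vertices[OF decoratedD(1)[OF D]] assms(3) by fastforce
  have "P y" if "y \<in> Inl ` gV G \<union> Inr ` gE G" for y
  proof (rule wf_graph_connected_induct[OF G _ _ _ that])
    show "Inl (dvt D u) \<in> Inl ` gV G \<union> Inr ` gE G" "P (Inl (dvt D u))"
      using u decoratedD(3)[OF D] by (auto simp: P_def)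
  next
    fix x y assume "(x, y) \<in> incidence G"
    then obtain v e where xy: "x = Inl v" "y = Inr e" "v \<in> gV G"
      and e: "e \<in> set (gin G v) \<or> e \<in> set (gout G v)"
      by (elim incidenceE)
    show "P x \<longleftrightarrow> P y"
    proof
      assume "P x"
      then obtain u where "u \<in> gV (dg D)" "v = dvt D u" using xy by (auto simp: P_def)
      with e show "P y"
        using xy wf_graph_vertex[OF decoratedD(1)[OF D]] by (auto simp: P_def decoratedD(4,5)[OF D])
    next
      assume "P y"
      then obtain b where "b \<in> gE (dg D)" "e = dcol D b" using xy by (auto simp: P_def)
      with e show "P x"
        using xy assms(3,4) decorated_in_edge_target[OF G D] decorated_out_edge_source[OF G D]
        by (auto simp: P_def)
    qed
  qed
  then show "gV G \<subseteq> dvt D ` gV (dg D)" "gE G \<subseteq> dcol D ` gE (dg D)"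
    by (force simp: P_def)+
qed

lemma mem_of_map_eq_inj_on:
  assumes "inj_on f A" "set xs \<subseteq> A" "x \<in> A" "map f xs = map g ys" "y \<in> set ys" "g y = f x"
  shows "x \<in> set xs"
proof -
  have "f x \<in> f ` set xs" using assms(4-6) by (metis image_eqI list.set_map)
  with assms(1-3) show ?thesis by (auto dest: inj_onD)
qed

lemma decorated_in_edge_lift:
  assumes G: "wf_graph G" and D: "decorated G D" and D': "decorated G D'"
    and inj: "inj_on (dcol D) (gE (dg D))"
    and outs: "map (dcol D) (goutG (dg D)) = map (dcol D') (goutG (dg D'))"
    and u: "u \<in> gV (dg D)" and b: "b \<in> set (gin (dg D) u)"
    and b': "b' \<in> gE (dg D')" "dcol D' b' = dcol D b"
  shows "dvt D u \<in> dvt D' ` gV (dg D')"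
proof -
  note wf_D = decoratedD(1)[OF D]
  have "b \<in> gE (dg D)" using wf_graph_in_edge[OF wf_D u b] .
  then have "b' \<notin> set (goutG (dg D'))"
    using mem_of_map_eq_inj_on[OF inj _ _ outs] wf_graph_in_not_outG[OF wf_D u b]
      wf_graph_boundary(4)[OF wf_D] b'(2) by blast
  moreover have "dcol D' b' \<in> set (gin G (dvt D u))"
    using b b'(2) by (auto simp: decoratedD(4)[OF D u])
  ultimately show ?thesis
    using decorated_in_edge_target[OF G D' b'(1)] decoratedD(3)[OF D u] by blast
qed

lemma decorated_out_edge_lift:
  assumes "wf_graph G" "decorated G D" "decorated G D'"
    and "inj_on (dcol D) (gE (dg D))"
    and "map (dcol D) (ginG (dg D)) = map (dcol D') (ginG (dg D'))"
    and "u \<in> gV (dg D)" "b \<in> set (gout (dg D) u)"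
    and "b' \<in> gE (dg D')" "dcol D' b' = dcol D b"
  shows "dvt D u \<in> dvt D' ` gV (dg D')"
  using decorated_in_edge_lift[of "reverse_graph G" "reverse_decgraph D" "reverse_decgraph D'"] assms
  by simp

lemma decorated_image_incidence_invariant:
  assumes G: "wf_graph G" and D: "decorated G D" and D': "decorated G D'"
    and inj: "inj_on (dcol D) (gE (dg D))"
    and ins: "map (dcol D) (ginG (dg D)) = map (dcol D') (ginG (dg D'))"
    and outs: "map (dcol D) (goutG (dg D)) = map (dcol D') (goutG (dg D'))"
    and u: "u \<in> gV (dg D)" and b: "b \<in> set (gin (dg D) u) \<union> set (gout (dg D) u)"
  shows "dvt D u \<in> dvt D' ` gV (dg D') \<longleftrightarrow> dcol D b \<in> dcol D' ` gE (dg D')"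
proof
  assume "dvt D u \<in> dvt D' ` gV (dg D')"
  then obtain u' where u': "u' \<in> gV (dg D')" "dvt D u = dvt D' u'" by blast
  have "dcol D b \<in> set (gin G (dvt D u)) \<union> set (gout G (dvt D u))"
    using b by (auto simp: decoratedD(4,5)[OF D u])
  also have "\<dots> = dcol D' ` (set (gin (dg D') u') \<union> set (gout (dg D') u'))"
    by (simp add: u' decoratedD(4,5)[OF D' u'(1)] image_Un)
  also have "\<dots> \<subseteq> dcol D' ` gE (dg D')"
    using wf_graph_vertex[OF decoratedD(1)[OF D'] u'(1)] by blast
  finally show "dcol D b \<in> dcol D' ` gE (dg D')" .
next
  assume "dcol D b \<in> dcol D' ` gE (dg D')"
  then obtain b' where "b' \<in> gE (dg D')" "dcol D' b' = dcol D b" by force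
  with b show "dvt D u \<in> dvt D' ` gV (dg D')"
    using decorated_in_edge_lift[OF G D D' inj outs u] decorated_out_edge_lift[OF G D D' inj ins u]
    by blast
qed

lemma decorated_image_subset:
  assumes G: "wf_graph G" and D: "decorated G D" and D': "decorated G D'"
    and inj: "inj_on (dcol D) (gE (dg D))"
    and ins: "map (dcol D) (ginG (dg D)) = map (dcol D') (ginG (dg D'))"
    and outs: "map (dcol D) (goutG (dg D)) = map (dcol D') (goutG (dg D'))"
  shows "dvt D ` gV (dg D) \<subseteq> dvt D' ` gV (dg D') \<and> dcol D ` gE (dg D) \<subseteq> dcol D' ` gE (dg D')"
proof -
  note wf_D = decoratedD(1)[OF D] and wf_D' = decoratedD(1)[OF D']
  consider "ginG (dg D) = []" "goutG (dg D) = []" | b0 where "b0 \<in> set (ginG (dg D) @ goutG (dg D))"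
    by (metis append_is_Nil_conv list.set_sel(1))
  then show ?thesis
  proof cases
    case 1
    with ins outs have "ginG (dg D') = []" "goutG (dg D') = []" by simp_all
    with decorated_without_boundary_covers[OF G D'] decoratedD(2,3)[OF D] show ?thesis
      by blast
  next
    case (2 b0)
    define P where "P x = (case x of Inl u \<Rightarrow> dvt D u \<in> dvt D' ` gV (dg D')
                                  | Inr b \<Rightarrow> dcol D b \<in> dcol D' ` gE (dg D'))" for x
    have "P y" if "y \<in> Inl ` gV (dg D) \<union> Inr ` gE (dg D)" for y
    proof (rule wf_graph_connected_induct[OF wf_D _ _ _ that])
      have "dcol D b0 \<in> set (map (dcol D') (ginG (dg D') @ goutG (dg D')))"
        using 2 ins outs by (metis image_eqI list.set_map map_append)
      then show "Inr b0 \<in> Inl ` gV (dg D) \<union> Inr ` gE (dg D)" "P (Inr b0)"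
        using 2 wf_graph_boundary[OF wf_D] wf_graph_boundary[OF wf_D'] by (auto simp: P_def)
    next
      fix x y assume "(x, y) \<in> incidence (dg D)"
      then show "P x \<longleftrightarrow> P y"
        using decorated_image_incidence_invariant[OF G D D' inj ins outs]
        by (elim incidenceE) (simp add: P_def)
    qed
    then show ?thesis by (force simp: P_def)
  qed
qed

lemma map_inv_into_eq:
  assumes "inj_on g B" "set ys \<subseteq> B" "map f xs = map g ys"
  shows "ys = map (inv_into B g \<circ> f) xs"
proof -
  have "map (inv_into B g \<circ> f) xs = map (inv_into B g) (map g ys)"
    by (simp flip: assms(3))
  also have "\<dots> = ys" using assms(1,2) by (simp add: map_idI subset_iff)
  finally show ?thesis by simp
qed

lemma bij_betw_inv_into_comp:
  assumes "inj_on f A" "inj_on g B" "f ` A = g ` B"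
  shows "bij_betw (inv_into B g \<circ> f) A B"
  using assms bij_betw_inv_into bij_betw_trans inj_on_imp_bij_betw by metis

lemma dec_iso_if_same_image:
  assumes D: "decorated G D" and D': "decorated G D'"
    and inj: "injectively_decorated D" "injectively_decorated D'"
    and V: "dvt D ` gV (dg D) = dvt D' ` gV (dg D')"
    and E: "dcol D ` gE (dg D) = dcol D' ` gE (dg D')"
    and ins: "map (dcol D) (ginG (dg D)) = map (dcol D') (ginG (dg D'))"
    and outs: "map (dcol D) (goutG (dg D)) = map (dcol D') (goutG (dg D'))"
  shows "dec_iso D D'"
proof -
  define \<alpha> where "\<alpha> = inv_into (gV (dg D')) (dvt D') \<circ> dvt D"
  define \<beta> where "\<beta> = inv_into (gE (dg D')) (dcol D') \<circ> dcol D"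
  note wf_D' = decoratedD(1)[OF D']
  have inj_dcol': "inj_on (dcol D') (gE (dg D'))" using inj(2) by (simp add: injectively_decorated_def)
  have bij: "bij_betw \<alpha> (gV (dg D)) (gV (dg D'))" "bij_betw \<beta> (gE (dg D)) (gE (dg D'))"
    using inj V E unfolding \<alpha>_def \<beta>_def injectively_decorated_def
    by (auto intro: bij_betw_inv_into_comp)
  have dvt_\<alpha>: "dvt D' (\<alpha> u) = dvt D u" if "u \<in> gV (dg D)" for u
    unfolding \<alpha>_def using V that by (metis comp_apply f_inv_into_f image_eqI)
  have dcol_\<beta>: "dcol D' (\<beta> b) = dcol D b" if "b \<in> gE (dg D)" for b
    unfolding \<beta>_def using E that by (metis comp_apply f_inv_into_f image_eqI)
  have "gin (dg D') (\<alpha> u) = map \<beta> (gin (dg D) u) \<and> gout (dg D') (\<alpha> u) = map \<beta> (gout (dg D) u)"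
    if u: "u \<in> gV (dg D)" for u
  proof -
    have u': "\<alpha> u \<in> gV (dg D')" using bij_betwE[OF bij(1)] u by blast
    have "map (dcol D) (gin (dg D) u) = map (dcol D') (gin (dg D') (\<alpha> u))"
      "map (dcol D) (gout (dg D) u) = map (dcol D') (gout (dg D') (\<alpha> u))"
      using decoratedD(4,5)[OF D u] decoratedD(4,5)[OF D' u'] dvt_\<alpha>[OF u] by simp_all
    with wf_graph_vertex[OF wf_D' u'] show ?thesis
      unfolding \<beta>_def by (metis map_inv_into_eq[OF inj_dcol'])
  qed
  moreover have "ginG (dg D') = map \<beta> (ginG (dg D))" "goutG (dg D') = map \<beta> (goutG (dg D))"
    using map_inv_into_eq[OF inj_dcol' _ ins] map_inv_into_eq[OF inj_dcol' _ outs]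
      wf_graph_boundary(3,4)[OF wf_D'] unfolding \<beta>_def by simp_all
  ultimately have "graph_iso (dg D) (dg D') \<alpha> \<beta>"
    using bij unfolding graph_iso_def by blast
  with dvt_\<alpha> dcol_\<beta> show ?thesis unfolding dec_iso_def by blast
qed

lemma dec_iso_if_same_boundary:
  assumes G: "wf_graph G" and D: "decorated G D" and D': "decorated G D'"
    and inj: "injectively_decorated D" "injectively_decorated D'"
    and ins: "map (dcol D) (ginG (dg D)) = map (dcol D') (ginG (dg D'))"
    and outs: "map (dcol D) (goutG (dg D)) = map (dcol D') (goutG (dg D'))"
  shows "dec_iso D D'"
proof -
  have "dvt D ` gV (dg D) \<subseteq> dvt D' ` gV (dg D') \<and> dcol D ` gE (dg D) \<subseteq> dcol D' ` gE (dg D')"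
    using decorated_image_subset[OF G D D' _ ins outs] inj(1) by (simp add: injectively_decorated_def)
  moreover have "dvt D' ` gV (dg D') \<subseteq> dvt D ` gV (dg D) \<and> dcol D' ` gE (dg D') \<subseteq> dcol D ` gE (dg D)"
    using decorated_image_subset[OF G D' D _ ins[symmetric] outs[symmetric]] inj(2)
    by (simp add: injectively_decorated_def)
  ultimately show ?thesis
    using dec_iso_if_same_image[OF D D' inj _ _ ins outs] by (simp add: subset_antisym)
qed

theorem mainTheorem2:
  fixes G :: "('vG, 'eG) graph" and H :: "('vH, 'eH) graph"
    and f0 f0' :: "'eH \<Rightarrow> 'eG"
    and f1 :: "'vH \<Rightarrow> ('a, 'b, 'vG, 'eG) decgraph"
    and f1' :: "'vH \<Rightarrow> ('c, 'd, 'vG, 'eG) decgraph"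
  assumes "wf_graph G" and "wf_graph H"
    and "properad_morphism H G f0 f1"
    and "properad_morphism H G f0' f1'"
    and "is_subgraph G (image_dg H f0 f1)"
    and "is_subgraph G (image_dg H f0' f1')"
    and "\<forall>e\<in>gE H. f0 e = f0' e"
  shows "\<forall>v\<in>gV H. dec_iso (f1 v) (f1' v)"
proof
  fix v assume v: "v \<in> gV H"
  have "map f0 (gin H v) = map f0' (gin H v)" "map f0 (gout H v) = map f0' (gout H v)"
    using assms(7) wf_graph_vertex[OF assms(2) v] by (auto simp: subset_iff)
  then have "map (dcol (f1 v)) (ginG (dg (f1 v))) = map (dcol (f1' v)) (ginG (dg (f1' v)))"
    "map (dcol (f1 v)) (goutG (dg (f1 v))) = map (dcol (f1' v)) (goutG (dg (f1' v)))"
    using properad_morphismD(2,3)[OF assms(3) v] properad_morphismD(2,3)[OF assms(4) v] by simp_all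
  moreover have "injectively_decorated (f1 v)" "injectively_decorated (f1' v)"
    using injectively_decorated_image_dg_vertex[OF assms(2,3) is_subgraph_injectively_decorated[OF assms(5)] v]
      injectively_decorated_image_dg_vertex[OF assms(2,4) is_subgraph_injectively_decorated[OF assms(6)] v] .
  ultimately show "dec_iso (f1 v) (f1' v)"
    using dec_iso_if_same_boundary[OF assms(1)] properad_morphismD(1)[OF assms(3) v]
      properad_morphismD(1)[OF assms(4) v] by blast
qed

end
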